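(* Let $(\rho,m,\theta)$ be a smooth positive triple on $(0,T]\times\omega$ with $m=0$ on $\partial\omega$ which satisfies, for all $t$ and all $q\in L^2(\omega)$, $v\in H_0(\mathrm{div};\omega)$, $w\in H^1(\omega)$, \begin{align*} (\partial_t\rho,q)+(\partial_x m,q)&=0,\\ \Big(\frac1\rho\partial_t m-\frac{m}{2\rho^2}\partial_t\rho,v\Big)-\Big(\frac{m^2}{2\rho^2}+(\rho P)_\rho,\partial_x v\Big)+\Big(\frac{m}{2\rho^2}\partial_x m-P_\theta\partial_x\theta,v\Big)&=0,\\ \Big(\rho\,\partial_t e-\frac p\rho\partial_t\rho,\frac w\theta\Big)-\Big(Q-\theta P_\theta,\partial_x\Big(m\frac w\theta\Big)\Big)+\Big(mP_\theta\partial_x\theta,\frac w\theta\Big)&=0. \end{align*} Then \[ \frac{d}{dt}\int_\omega\rho\,dx=0,\qquad \frac{d}{dt}\int_\omega E\,dx=0,\qquad \frac{d}{dt}\int_\omega\rho s\,dx=0. \]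
   Context: Let $\omega=[v_1,v_2]\subset\mathbb R$ be a bounded closed interval; $(u,v)=\int_\omega uv\,dx$, $H^1(\omega)=\{w\in L^2:\partial_x w\in L^2\}$, $H_0(\mathrm{div};\omega)=\{v\in L^2:\partial_x v\in L^2,\ v=0\text{ on }\partial\omega\}$. Subscripts denote partial derivatives. The constitutive relations are given through a pressure potential $P\in C^3((0,\infty)^2)$ and a thermal potential $Q\in C^2((0,\infty))$ (function of $\theta$ only), satisfying for all $\rho,\theta>0$: $P_\rho\ge 0$, $(\rho P_\rho)_\rho\ge 0$, and $Q_\theta-\theta P_{\theta\theta}\ge \underline c_v>0$. The pressure is $p=\rho^2P_\rho$, the specific internal energy $e=P-\theta P_\theta+Q$, the specific entropy $s(\rho,\theta)=\int_1^\theta\frac{Q_\theta(t)}{t}dt-P_\theta(\rho,\theta)$, and the total energy density $E=\frac{m^2}{2\rho}+\rho e$, all evaluated at $(\rho,\theta)$. A smooth positive triple is $(\rho,m,\theta)\in C^1((0,T]\times\omega)^3$ with $\rho,\theta>0$. *)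

theory Defs
  imports "HOL-Analysis.Analysis"
begin

definition pd1 :: "(real \<times> real \<Rightarrow> real) \<Rightarrow> real \<times> real \<Rightarrow> real" where
  "pd1 f z = deriv (\<lambda>r. f (r, snd z)) (fst z)"

definition pd2 :: "(real \<times> real \<Rightarrow> real) \<Rightarrow> real \<times> real \<Rightarrow> real" where
  "pd2 f z = deriv (\<lambda>s. f (fst z, s)) (snd z)"

fun Ck :: "nat \<Rightarrow> (real \<times> real) set \<Rightarrow> (real \<times> real \<Rightarrow> real) \<Rightarrow> bool" where
  "Ck 0 U f = continuous_on U f"
| "Ck (Suc k) U f = (f differentiable_on U \<and> Ck k U (pd1 f) \<and> Ck k U (pd2 f))"

fun Ck1 :: "nat \<Rightarrow> real set \<Rightarrow> (real \<Rightarrow> real) \<Rightarrow> bool" where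
  "Ck1 0 U f = continuous_on U f"
| "Ck1 (Suc k) U f = (f differentiable_on U \<and> Ck1 k U (deriv f))"

definition C1_on :: "(real \<times> real) set \<Rightarrow> (real \<Rightarrow> real \<Rightarrow> real) \<Rightarrow>
    (real \<Rightarrow> real \<Rightarrow> real) \<Rightarrow> (real \<Rightarrow> real \<Rightarrow> real) \<Rightarrow> bool" where
  "C1_on S f ft fx \<longleftrightarrow>
     continuous_on S (\<lambda>(t,x). ft t x) \<and> continuous_on S (\<lambda>(t,x). fx t x) \<and>
     (\<forall>(t,x)\<in>S. ((\<lambda>(s,y). f s y) has_derivative (\<lambda>(h,k). ft t x * h + fx t x * k))
                   (at (t,x) within S))"

definition ip :: "real set \<Rightarrow> (real \<Rightarrow> real) \<Rightarrow> (real \<Rightarrow> real) \<Rightarrow> real" where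
  "ip \<omega> u v = (LINT x|lebesgue_on \<omega>. u x * v x)"

definition L2 :: "real set \<Rightarrow> (real \<Rightarrow> real) \<Rightarrow> bool" where
  "L2 \<omega> f \<longleftrightarrow> f \<in> borel_measurable (lebesgue_on \<omega>) \<and> integrable (lebesgue_on \<omega>) (\<lambda>x. (f x)^2)"

definition smooth_fun :: "(real \<Rightarrow> real) \<Rightarrow> bool" where
  "smooth_fun \<phi> \<longleftrightarrow> (\<forall>n x. ((deriv ^^ n) \<phi>) differentiable (at x))"

definition test_fun :: "real set \<Rightarrow> (real \<Rightarrow> real) \<Rightarrow> bool" where
  "test_fun \<omega> \<phi> \<longleftrightarrow> smooth_fun \<phi> \<and>
     (\<exists>K. compact K \<and> K \<subseteq> interior \<omega> \<and> (\<forall>x. x \<notin> K \<longrightarrow> \<phi> x = 0))"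

definition weak_deriv :: "real set \<Rightarrow> (real \<Rightarrow> real) \<Rightarrow> (real \<Rightarrow> real) \<Rightarrow> bool" where
  "weak_deriv \<omega> f g \<longleftrightarrow> integrable (lebesgue_on \<omega>) f \<and> integrable (lebesgue_on \<omega>) g \<and>
     (\<forall>\<phi>. test_fun \<omega> \<phi> \<longrightarrow> ip \<omega> f (deriv \<phi>) = - ip \<omega> g \<phi>)"

definition H1 :: "real set \<Rightarrow> (real \<Rightarrow> real) \<Rightarrow> bool" where
  "H1 \<omega> w \<longleftrightarrow> L2 \<omega> w \<and> (\<exists>g. L2 \<omega> g \<and> weak_deriv \<omega> w g)"

text \<open>H_0(div): L^2 with L^2 derivative g and vanishing boundary trace, expressed by
  Green's formula against all smooth functions (no boundary term).\<close>
definition H0div :: "real set \<Rightarrow> (real \<Rightarrow> real) \<Rightarrow> bool" where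
  "H0div \<omega> v \<longleftrightarrow> L2 \<omega> v \<and>
     (\<exists>g. L2 \<omega> g \<and> (\<forall>\<phi>. smooth_fun \<phi> \<longrightarrow> ip \<omega> v (deriv \<phi>) = - ip \<omega> g \<phi>))"

section \<open>Constitutive relations (arguments z = (rho, theta))\<close>

definition pres :: "(real \<times> real \<Rightarrow> real) \<Rightarrow> real \<times> real \<Rightarrow> real" where
  "pres P z = (fst z)^2 * pd1 P z"

definition eint :: "(real \<times> real \<Rightarrow> real) \<Rightarrow> (real \<Rightarrow> real) \<Rightarrow> real \<times> real \<Rightarrow> real" where
  "eint P Q z = P z - snd z * pd2 P z + Q (snd z)"

definition entr :: "(real \<times> real \<Rightarrow> real) \<Rightarrow> (real \<Rightarrow> real) \<Rightarrow> real \<times> real \<Rightarrow> real" where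
  "entr P Q z = (LBINT t=1..snd z. deriv Q t / t) - pd2 P z"

definition Etot :: "(real \<times> real \<Rightarrow> real) \<Rightarrow> (real \<Rightarrow> real) \<Rightarrow> real \<Rightarrow> real \<Rightarrow> real \<Rightarrow> real" where
  "Etot P Q r mm s = mm^2 / (2 * r) + r * eint P Q (r, s)"

end

theory Submission
  imports Defs
begin

(* Differentiating under the integral sign, each law reduces to the vanishing of the integral
   over \<omega> of a pointwise time derivative, and each such derivative is a sum of residuals of
   the weak equations tested with C^1 functions built from the solution itself: q = 1 for the
   mass; v = m, w = \<theta> and q = e + p/\<rho> for the energy; w = 1 and q = s for the entropy,
   plus the exact derivative \<partial>\<^sub>x (m (Q/\<theta> - \<Phi>(\<theta>))) with \<Phi>(\<theta>) = \<integral>\<^sub>1\<^sup>\<theta> Q'(t)/t dt.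
   All these test functions are admissible because m vanishes on the boundary, which is also
   why the exact derivative integrates to zero. *)

lemma C1_on_has_real_derivative_t:
  assumes "C1_on (U \<times> I) f ft fx" "t \<in> U" "x \<in> I"
  shows "((\<lambda>s. f s x) has_real_derivative ft t x) (at t within U)"
proof -
  have D: "((\<lambda>(s,y). f s y) has_derivative (\<lambda>(h,k). ft t x * h + fx t x * k)) (at (t,x) within U \<times> I)"
    using assms unfolding C1_on_def by auto
  have "((\<lambda>s. (s,x)) has_derivative (\<lambda>h. (h,0))) (at t within U)"
    by (auto intro!: derivative_eq_intros)
  from has_derivative_in_compose[OF this has_derivative_subset[OF D]]
  have "((\<lambda>s. f s x) has_derivative (\<lambda>h. ft t x * h)) (at t within U)"
    using assms(3) by auto
  then show ?thesis
    by (simp add: has_field_derivative_def)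
qed

lemma C1_on_has_real_derivative_x:
  assumes "C1_on (U \<times> I) f ft fx" "t \<in> U" "x \<in> I"
  shows "((\<lambda>y. f t y) has_real_derivative fx t x) (at x within I)"
proof -
  have D: "((\<lambda>(s,y). f s y) has_derivative (\<lambda>(h,k). ft t x * h + fx t x * k)) (at (t,x) within U \<times> I)"
    using assms unfolding C1_on_def by auto
  have "((\<lambda>y. (t,y)) has_derivative (\<lambda>k. (0,k))) (at x within I)"
    by (auto intro!: derivative_eq_intros)
  from has_derivative_in_compose[OF this has_derivative_subset[OF D]]
  have "((\<lambda>y. f t y) has_derivative (\<lambda>k. fx t x * k)) (at x within I)"
    using assms(2) by auto
  then show ?thesis
    by (simp add: has_field_derivative_def)
qed

lemma C1_on_continuous_on:
  assumes "C1_on S f ft fx"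
  shows "continuous_on S (\<lambda>(t,x). f t x)"
  unfolding continuous_on_eq_continuous_within
proof
  fix z assume "z \<in> S"
  with assms have "((\<lambda>(s,y). f s y) has_derivative (\<lambda>(h,k). ft (fst z) (snd z) * h + fx (fst z) (snd z) * k))
      (at z within S)"
    unfolding C1_on_def by (cases z) auto
  then show "continuous (at z within S) (\<lambda>(t,x). f t x)"
    by (rule has_derivative_continuous)
qed

lemma has_real_derivative_pd1:
  assumes "f differentiable (at (a,b))"
  shows "((\<lambda>r. f (r,b)) has_real_derivative pd1 f (a,b)) (at a)"
proof -
  have "(f \<circ> (\<lambda>r. (r,b))) differentiable (at a)"
    by (rule differentiable_chain_at) (auto simp: assms intro!: derivative_intros)
  then show ?thesis
    by (simp add: pd1_def o_def DERIV_deriv_iff_real_differentiable)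
qed

lemma has_real_derivative_pd2:
  assumes "f differentiable (at (a,b))"
  shows "((\<lambda>s. f (a,s)) has_real_derivative pd2 f (a,b)) (at b)"
proof -
  have "(f \<circ> (\<lambda>s. (a,s))) differentiable (at b)"
    by (rule differentiable_chain_at) (auto simp: assms intro!: derivative_intros)
  then show ?thesis
    by (simp add: pd2_def o_def DERIV_deriv_iff_real_differentiable)
qed

lemma has_derivative_pd:
  fixes f :: "real \<times> real \<Rightarrow> real"
  assumes "f differentiable (at z)"
  shows "(f has_derivative (\<lambda>(h,k). pd1 f z * h + pd2 f z * k)) (at z)"
proof -
  obtain D where D: "(f has_derivative D) (at z)"
    using assms unfolding differentiable_def by blast
  obtain a b where z: "z = (a,b)" by (cases z)
  have "((\<lambda>r. (r,b)) has_derivative (\<lambda>h. (h,0))) (at a)"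
    by (auto intro!: derivative_eq_intros)
  from has_derivative_compose[OF this D[unfolded z]]
  have "((\<lambda>r. f (r,b)) has_derivative (\<lambda>h. D (h,0))) (at a)" .
  moreover have "((\<lambda>r. f (r,b)) has_derivative (\<lambda>h. pd1 f z * h)) (at a)"
    using has_real_derivative_pd1[OF assms[unfolded z]] z
    by (simp add: has_field_derivative_def)
  ultimately have D1: "(\<lambda>h. D (h,0)) = (\<lambda>h. pd1 f z * h)"
    by (rule has_derivative_unique)
  have "((\<lambda>s. (a,s)) has_derivative (\<lambda>k. (0,k))) (at b)"
    by (auto intro!: derivative_eq_intros)
  from has_derivative_compose[OF this D[unfolded z]]
  have "((\<lambda>s. f (a,s)) has_derivative (\<lambda>k. D (0,k))) (at b)" .
  moreover have "((\<lambda>s. f (a,s)) has_derivative (\<lambda>k. pd2 f z * k)) (at b)"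
    using has_real_derivative_pd2[OF assms[unfolded z]] z
    by (simp add: has_field_derivative_def)
  ultimately have D2: "(\<lambda>k. D (0,k)) = (\<lambda>k. pd2 f z * k)"
    by (rule has_derivative_unique)
  have "D (h,k) = pd1 f z * h + pd2 f z * k" for h k
    using linear_add[OF has_derivative_linear[OF D], of "(h,0)" "(0,k)"] D1 D2
    by (simp add: fun_eq_iff)
  then have "D = (\<lambda>(h,k). pd1 f z * h + pd2 f z * k)"
    by auto
  with D show ?thesis
    by simp
qed

lemma has_real_derivative_pd_chain:
  fixes f :: "real \<times> real \<Rightarrow> real"
  assumes "f differentiable (at (a s, b s))"
    and "(a has_real_derivative a') (at s within U)" "(b has_real_derivative b') (at s within U)"
  shows "((\<lambda>s. f (a s, b s)) has_real_derivative pd1 f (a s, b s) * a' + pd2 f (a s, b s) * b')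
           (at s within U)"
proof -
  have "((\<lambda>s. (a s, b s)) has_derivative (\<lambda>h. (a' * h, b' * h))) (at s within U)"
    using assms(2,3) unfolding has_field_derivative_def by (intro has_derivative_Pair)
  from has_derivative_compose[OF this has_derivative_pd[OF assms(1)]]
  show ?thesis
    unfolding has_field_derivative_def
    by (rule has_derivative_eq_rhs) (auto simp: algebra_simps)
qed

lemma continuous_imp_L2:
  "continuous_on {a..b} f \<Longrightarrow> L2 {a..b} (f :: real \<Rightarrow> real)"
  unfolding L2_def
  by (auto intro!: continuous_imp_measurable_on_sets_lebesgue continuous_imp_integrable_real
      continuous_intros)

lemma LINT_continuous_eq_integral:
  "continuous_on {a..b} f \<Longrightarrow> (LINT x|lebesgue_on {a..b}. f x) = integral {a..b} (f :: real \<Rightarrow> real)"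
  by (rule lebesgue_integral_eq_integral[OF continuous_imp_integrable_real]) auto

lemma has_bochner_integral_FTC:
  fixes F f :: "real \<Rightarrow> real"
  assumes "a \<le> b" and "\<And>x. x \<in> {a..b} \<Longrightarrow> (F has_real_derivative f x) (at x within {a..b})"
    and "continuous_on {a..b} f"
  shows "has_bochner_integral (lebesgue_on {a..b}) f (F b - F a)"
proof -
  have "(f has_integral (F b - F a)) {a..b}"
    using assms(1,2) by (intro fundamental_theorem_of_calculus)
      (simp_all add: has_real_derivative_iff_has_vector_derivative)
  then show ?thesis
    using assms(3) continuous_imp_integrable_real
    by (simp add: has_bochner_integral_iff LINT_continuous_eq_integral integral_unique)
qed

lemma has_bochner_integral_add3_cong:
  fixes f g h :: "'a \<Rightarrow> real"
  assumes "has_bochner_integral M f a" "has_bochner_integral M g b" "has_bochner_integral M h c"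
    and "\<And>x. x \<in> space M \<Longrightarrow> F x = f x + g x + h x"
  shows "has_bochner_integral M F (a + b + c)"
  using has_bochner_integral_add[OF has_bochner_integral_add[OF assms(1,2)] assms(3)]
  by (rule has_bochner_integral_cong[THEN iffD1, rotated 3]) (simp_all add: assms(4))

lemma ip_integrate_by_parts:
  fixes v g \<phi> \<phi>' :: "real \<Rightarrow> real"
  assumes "a \<le> b"
    and "\<And>x. x \<in> {a..b} \<Longrightarrow> (v has_real_derivative g x) (at x within {a..b})"
    and "\<And>x. x \<in> {a..b} \<Longrightarrow> (\<phi> has_real_derivative \<phi>' x) (at x within {a..b})"
    and "continuous_on {a..b} g" "continuous_on {a..b} \<phi>'"
    and "v b * \<phi> b = v a * \<phi> a"
  shows "ip {a..b} v \<phi>' = - ip {a..b} g \<phi>"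
proof -
  have "continuous_on {a..b} v" "continuous_on {a..b} \<phi>"
    using assms(2,3) by (metis DERIV_continuous_on)+
  then have "has_bochner_integral (lebesgue_on {a..b}) (\<lambda>x. g x * \<phi> x + v x * \<phi>' x)
      (v b * \<phi> b - v a * \<phi> a)"
    using assms(1-5)
    by (intro has_bochner_integral_FTC) (auto intro!: derivative_eq_intros continuous_intros)
  moreover have "integrable (lebesgue_on {a..b}) (\<lambda>x. g x * \<phi> x)"
    "integrable (lebesgue_on {a..b}) (\<lambda>x. v x * \<phi>' x)"
    using \<open>continuous_on {a..b} v\<close> \<open>continuous_on {a..b} \<phi>\<close> assms(4,5)
    by (auto intro!: continuous_imp_integrable_real continuous_intros)
  ultimately have "ip {a..b} g \<phi> + ip {a..b} v \<phi>' = 0"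
    unfolding ip_def has_bochner_integral_iff using assms(6) by simp
  then show ?thesis
    by simp
qed

lemma smooth_fun_has_real_derivative:
  "smooth_fun \<phi> \<Longrightarrow> (\<phi> has_real_derivative deriv \<phi> x) (at x)"
  unfolding smooth_fun_def by (metis DERIV_deriv_iff_real_differentiable funpow_0)

lemma smooth_fun_continuous_on_deriv:
  assumes "smooth_fun \<phi>"
  shows "continuous_on S (deriv \<phi>)"
proof -
  have "deriv \<phi> differentiable (at x)" for x
    using assms[unfolded smooth_fun_def, rule_format, of 1 x] by simp
  then show ?thesis
    by (meson continuous_at_imp_continuous_on differentiable_imp_continuous_within)
qed

lemma C1_imp_weak_deriv:
  fixes v g :: "real \<Rightarrow> real"
  assumes "a \<le> b" and "\<And>x. x \<in> {a..b} \<Longrightarrow> (v has_real_derivative g x) (at x within {a..b})"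
    and "continuous_on {a..b} g"
  shows "weak_deriv {a..b} v g"
proof -
  have "continuous_on {a..b} v"
    using assms(2) by (rule DERIV_continuous_on)
  moreover have "ip {a..b} v (deriv \<phi>) = - ip {a..b} g \<phi>" if "test_fun {a..b} \<phi>" for \<phi>
  proof (rule ip_integrate_by_parts[OF assms(1,2) _ assms(3)])
    have "smooth_fun \<phi>" "\<phi> a = 0" "\<phi> b = 0"
      using that unfolding test_fun_def by auto
    then show "(\<phi> has_real_derivative deriv \<phi> x) (at x within {a..b})"
      "continuous_on {a..b} (deriv \<phi>)" "v b * \<phi> b = v a * \<phi> a" for x
      by (auto intro: has_field_derivative_at_within smooth_fun_has_real_derivative
          smooth_fun_continuous_on_deriv)
  qed
  ultimately show ?thesis
    unfolding weak_deriv_def using assms(3) by (simp add: continuous_imp_integrable_real)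
qed

lemma C1_imp_H1:
  fixes v g :: "real \<Rightarrow> real"
  assumes "a \<le> b" and "\<And>x. x \<in> {a..b} \<Longrightarrow> (v has_real_derivative g x) (at x within {a..b})"
    and "continuous_on {a..b} g"
  shows "H1 {a..b} v"
proof -
  have "continuous_on {a..b} v"
    using assms(2) by (rule DERIV_continuous_on)
  then show ?thesis
    unfolding H1_def using assms by (blast intro: continuous_imp_L2 C1_imp_weak_deriv)
qed

lemma C1_imp_H0div:
  fixes v g :: "real \<Rightarrow> real"
  assumes "a \<le> b" and "\<And>x. x \<in> {a..b} \<Longrightarrow> (v has_real_derivative g x) (at x within {a..b})"
    and "continuous_on {a..b} g" and "v a = 0" "v b = 0"
  shows "H0div {a..b} v"
proof -
  have "continuous_on {a..b} v"
    using assms(2) by (rule DERIV_continuous_on)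
  moreover have "ip {a..b} v (deriv \<phi>) = - ip {a..b} g \<phi>" if "smooth_fun \<phi>" for \<phi>
    using that assms(4,5)
    by (intro ip_integrate_by_parts[OF assms(1,2) _ assms(3)])
      (auto intro: has_field_derivative_at_within smooth_fun_has_real_derivative
        smooth_fun_continuous_on_deriv)
  ultimately show ?thesis
    unfolding H0div_def using assms(3) by (blast intro: continuous_imp_L2)
qed

lemma continuous_on_slice:
  assumes "continuous_on (U \<times> X) (\<lambda>p. F (fst p) (snd p))" "s \<in> U"
  shows "continuous_on X (F s)"
proof -
  have "continuous_on X (\<lambda>x. (s,x))"
    by (intro continuous_intros)
  from continuous_on_compose2[OF assms(1) this] show ?thesis
    using assms(2) by auto
qed

lemma leibniz_rule_LINT:
  fixes F Ft :: "real \<Rightarrow> real \<Rightarrow> real"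
  assumes "convex U" "t \<in> U"
    and "\<And>s x. s \<in> U \<Longrightarrow> x \<in> {a..b} \<Longrightarrow> ((\<lambda>s. F s x) has_real_derivative Ft s x) (at s within U)"
    and "\<And>s. s \<in> U \<Longrightarrow> continuous_on {a..b} (F s)"
    and "continuous_on (U \<times> {a..b}) (\<lambda>p. Ft (fst p) (snd p))"
  shows "((\<lambda>s. LINT x|lebesgue_on {a..b}. F s x) has_real_derivative (LINT x|lebesgue_on {a..b}. Ft t x))
           (at t within U)"
proof -
  have "((\<lambda>s. integral (cbox a b) (F s)) has_real_derivative integral (cbox a b) (Ft t)) (at t within U)"
    using assms by (intro leibniz_rule_field_derivative)
      (auto intro: integrable_continuous_real simp: case_prod_beta')
  moreover have "continuous_on {a..b} (Ft t)"
    using assms(5,2) by (rule continuous_on_slice)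
  ultimately show ?thesis
    using assms(2,4)
    by (auto simp: LINT_continuous_eq_integral intro: has_field_derivative_transform_within[where d=1])
qed

abbreviation positive_quadrant :: "(real \<times> real) set" where
  "positive_quadrant \<equiv> {0<..} \<times> {0<..}"

lemma Ck_Suc_imp_Ck: "Ck (Suc k) U f \<Longrightarrow> Ck k U f"
proof (induction k arbitrary: f)
  case 0
  then show ?case by (simp add: differentiable_imp_continuous_on)
next
  case (Suc k)
  then show ?case by (metis Ck.simps(2))
qed

lemma Ck1_Suc_imp_Ck1: "Ck1 (Suc k) U f \<Longrightarrow> Ck1 k U f"
proof (induction k arbitrary: f)
  case 0
  then show ?case by (simp add: differentiable_imp_continuous_on)
next
  case (Suc k)
  then show ?case by (metis Ck1.simps(2))
qed

lemma pd1_fst_mult: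
  assumes "P differentiable (at (a,b))"
  shows "pd1 (\<lambda>z. fst z * P z) (a,b) = P (a,b) + a * pd1 P (a,b)"
proof -
  have "((\<lambda>r. r * P (r,b)) has_real_derivative 1 * P (a,b) + a * pd1 P (a,b)) (at a)"
    using has_real_derivative_pd1[OF assms] by (auto intro!: derivative_eq_intros)
  then show ?thesis
    unfolding pd1_def by (simp add: DERIV_imp_deriv)
qed

definition thermal_entropy :: "(real \<Rightarrow> real) \<Rightarrow> real \<Rightarrow> real" where
  "thermal_entropy Q u = (LBINT t=1..u. deriv Q t / t)"

definition thermal_flux :: "(real \<Rightarrow> real) \<Rightarrow> real \<Rightarrow> real" where
  "thermal_flux Q u = Q u / u - thermal_entropy Q u"

lemma entr_eq_thermal_entropy: "entr P Q z = thermal_entropy Q (snd z) - pd2 P z"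
  by (simp add: entr_def thermal_entropy_def)

lemma interval_integral_has_real_derivative:
  fixes g :: "real \<Rightarrow> real"
  assumes "continuous_on {0<..} g" "0 < u"
  shows "((\<lambda>u. LBINT y=1..u. g y) has_real_derivative g u) (at u)"
proof -
  define a b where "a = min 1 u / 2" and "b = max 1 u + 1"
  have ab: "0 < a" "a \<le> 1" "1 \<le> b" "a < u" "u < b"
    using assms(2) unfolding a_def b_def by auto
  have "continuous_on {a..b} g"
    by (rule continuous_on_subset[OF assms(1)]) (use ab in auto)
  then have "((\<lambda>u. LBINT y=1..u. g y) has_vector_derivative g u) (at u within {a..b})"
    using interval_integral_FTC2[of a 1 b g u] ab by (simp add: one_ereal_def)
  moreover have "at u within {a..b} = at u"
    by (rule at_within_interior) (use ab in auto)
  ultimately show ?thesis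
    by (simp add: has_real_derivative_iff_has_vector_derivative)
qed

locale equation_of_state =
  fixes P :: "real \<times> real \<Rightarrow> real" and Q :: "real \<Rightarrow> real"
  assumes P_C2: "Ck 2 positive_quadrant P" and Q_C1: "Ck1 1 {0<..} Q"
begin

lemma P_differentiable: "z \<in> positive_quadrant \<Longrightarrow> P differentiable (at z)"
  and pd2_P_differentiable: "z \<in> positive_quadrant \<Longrightarrow> pd2 P differentiable (at z)"
  using P_C2 by (cases z; simp add: numeral_2_eq_2 differentiable_on_eq_differentiable_at open_Times)+

lemma continuous_on_P:
  "continuous_on positive_quadrant P" "continuous_on positive_quadrant (pd1 P)"
  "continuous_on positive_quadrant (pd2 P)" "continuous_on positive_quadrant (pd1 (pd2 P))"
  "continuous_on positive_quadrant (pd2 (pd2 P))"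
  using P_C2 by (auto simp: numeral_2_eq_2 intro: differentiable_imp_continuous_on)

lemma Q_has_real_derivative: "0 < u \<Longrightarrow> (Q has_real_derivative deriv Q u) (at u)"
  using Q_C1 by (simp add: differentiable_on_eq_differentiable_at DERIV_deriv_iff_real_differentiable)

lemma continuous_on_Q: "continuous_on {0<..} Q" "continuous_on {0<..} (deriv Q)"
  using Q_C1 by (auto intro: differentiable_imp_continuous_on)

lemma thermal_entropy_has_real_derivative:
  "0 < u \<Longrightarrow> (thermal_entropy Q has_real_derivative deriv Q u / u) (at u)"
  unfolding thermal_entropy_def[abs_def]
  by (rule interval_integral_has_real_derivative) (auto intro!: continuous_intros continuous_on_Q)

lemma continuous_on_thermal_entropy: "continuous_on {0<..} (thermal_entropy Q)"
  by (rule continuous_at_imp_continuous_on)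
    (use thermal_entropy_has_real_derivative DERIV_isCont in auto)

lemma thermal_flux_has_real_derivative:
  assumes "0 < u"
  shows "(thermal_flux Q has_real_derivative - Q u / u\<^sup>2) (at u)"
  using assms Q_has_real_derivative[OF assms] thermal_entropy_has_real_derivative[OF assms]
  unfolding thermal_flux_def[abs_def]
  by (auto intro!: derivative_eq_intros simp: field_simps power2_eq_square)

lemma continuous_on_thermal_flux: "continuous_on {0<..} (thermal_flux Q)"
  by (rule continuous_at_imp_continuous_on)
    (use thermal_flux_has_real_derivative DERIV_isCont in auto)

lemma
  assumes "z \<in> positive_quadrant"
  shows pd1_eint: "pd1 (eint P Q) z = pd1 P z - snd z * pd1 (pd2 P) z"
    and pd2_eint: "pd2 (eint P Q) z = deriv Q (snd z) - snd z * pd2 (pd2 P) z"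
    and eint_differentiable: "eint P Q differentiable (at z)"
proof -
  obtain a b where z: "z = (a,b)" "0 < a" "0 < b"
    using assms by (cases z) auto
  note P = P_differentiable[OF assms] and P2 = pd2_P_differentiable[OF assms]
  have "((\<lambda>r. P (r,b) - b * pd2 P (r,b) + Q b) has_real_derivative pd1 P z - b * pd1 (pd2 P) z) (at a)"
    using has_real_derivative_pd1[OF P[unfolded z]] has_real_derivative_pd1[OF P2[unfolded z]] z
    by (auto intro!: derivative_eq_intros)
  then show "pd1 (eint P Q) z = pd1 P z - snd z * pd1 (pd2 P) z"
    unfolding pd1_def eint_def z by (simp add: DERIV_imp_deriv)
  have "((\<lambda>s. P (a,s) - s * pd2 P (a,s) + Q s) has_real_derivative
      pd2 P z - (1 * pd2 P z + b * pd2 (pd2 P) z) + deriv Q b) (at b)"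
    using has_real_derivative_pd2[OF P[unfolded z]] has_real_derivative_pd2[OF P2[unfolded z]]
      Q_has_real_derivative[OF z(3)] z
    by (auto intro!: derivative_eq_intros)
  then show "pd2 (eint P Q) z = deriv Q (snd z) - snd z * pd2 (pd2 P) z"
    unfolding pd2_def eint_def z by (simp add: DERIV_imp_deriv)
  have "(Q \<circ> snd) differentiable (at z)"
    using Q_has_real_derivative[OF z(3)] z
    by (intro differentiable_chain_at bounded_linear_imp_differentiable[OF bounded_linear_snd])
      (auto simp: real_differentiable_def)
  then show "eint P Q differentiable (at z)"
    unfolding eint_def[abs_def] o_def
    by (intro differentiable_add differentiable_diff differentiable_mult P P2
        bounded_linear_imp_differentiable[OF bounded_linear_snd])
qed

lemma continuous_on_constitutive:
  "continuous_on positive_quadrant (eint P Q)"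
  "continuous_on positive_quadrant (pd1 (eint P Q))"
  "continuous_on positive_quadrant (pd2 (eint P Q))"
  "continuous_on positive_quadrant (pd1 (\<lambda>z. fst z * P z))"
  "continuous_on positive_quadrant (pres P)"
  "continuous_on positive_quadrant (entr P Q)"
proof -
  show "continuous_on positive_quadrant (eint P Q)"
    by (intro continuous_at_imp_continuous_on ballI differentiable_imp_continuous_within
        eint_differentiable)
  have "continuous_on positive_quadrant (\<lambda>z. pd1 P z - snd z * pd1 (pd2 P) z)"
    by (intro continuous_intros continuous_on_P)
  then show "continuous_on positive_quadrant (pd1 (eint P Q))"
    by (rule continuous_on_cong[THEN iffD1, rotated 2]) (simp_all add: pd1_eint)
  have "continuous_on positive_quadrant (\<lambda>z. deriv Q (snd z) - snd z * pd2 (pd2 P) z)"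
    by (intro continuous_intros continuous_on_P continuous_on_compose2[OF continuous_on_Q(2)]) auto
  then show "continuous_on positive_quadrant (pd2 (eint P Q))"
    by (rule continuous_on_cong[THEN iffD1, rotated 2]) (simp_all add: pd2_eint)
  have "continuous_on positive_quadrant (\<lambda>z. P z + fst z * pd1 P z)"
    by (intro continuous_intros continuous_on_P)
  then show "continuous_on positive_quadrant (pd1 (\<lambda>z. fst z * P z))"
    by (rule continuous_on_cong[THEN iffD1, rotated 2])
      (auto simp: pd1_fst_mult P_differentiable)
  show "continuous_on positive_quadrant (pres P)"
    unfolding pres_def[abs_def] by (intro continuous_intros continuous_on_P)
  show "continuous_on positive_quadrant (entr P Q)"
    unfolding entr_eq_thermal_entropy[abs_def]
    by (intro continuous_intros continuous_on_P
        continuous_on_compose2[OF continuous_on_thermal_entropy]) auto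
qed

end

locale euler_weak_solution = equation_of_state P Q
  for P :: "real \<times> real \<Rightarrow> real" and Q :: "real \<Rightarrow> real" +
  fixes v1 v2 :: real and U :: "real set"
    and rho m th rho_t rho_x m_t m_x th_t th_x :: "real \<Rightarrow> real \<Rightarrow> real"
  assumes interval: "v1 \<le> v2"
    and convex_time: "convex U"
    and rho_C1: "C1_on (U \<times> {v1..v2}) rho rho_t rho_x"
    and m_C1: "C1_on (U \<times> {v1..v2}) m m_t m_x"
    and th_C1: "C1_on (U \<times> {v1..v2}) th th_t th_x"
    and positive: "\<And>t x. t \<in> U \<Longrightarrow> x \<in> {v1..v2} \<Longrightarrow> 0 < rho t x \<and> 0 < th t x"
    and m_boundary: "\<And>t. t \<in> U \<Longrightarrow> m t v1 = 0" "\<And>t. t \<in> U \<Longrightarrow> m t v2 = 0"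
    and continuity_eq: "\<And>t q. t \<in> U \<Longrightarrow> L2 {v1..v2} q \<Longrightarrow>
           ip {v1..v2} (\<lambda>x. rho_t t x) q + ip {v1..v2} (\<lambda>x. m_x t x) q = 0"
    and momentum_eq: "\<And>t v g. t \<in> U \<Longrightarrow> H0div {v1..v2} v \<Longrightarrow> weak_deriv {v1..v2} v g \<Longrightarrow>
           ip {v1..v2} (\<lambda>x. m_t t x / rho t x - m t x / (2 * (rho t x)^2) * rho_t t x) v
         - ip {v1..v2} (\<lambda>x. (m t x)^2 / (2 * (rho t x)^2)
                             + pd1 (\<lambda>z. fst z * P z) (rho t x, th t x)) g
         + ip {v1..v2} (\<lambda>x. m t x / (2 * (rho t x)^2) * m_x t x
                             - pd2 P (rho t x, th t x) * th_x t x) v = 0"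
    and energy_eq: "\<And>t w h. t \<in> U \<Longrightarrow> H1 {v1..v2} w \<Longrightarrow>
           weak_deriv {v1..v2} (\<lambda>x. m t x * (w x / th t x)) h \<Longrightarrow>
           ip {v1..v2} (\<lambda>x. rho t x * (pd1 (eint P Q) (rho t x, th t x) * rho_t t x
                                       + pd2 (eint P Q) (rho t x, th t x) * th_t t x)
                             - pres P (rho t x, th t x) / rho t x * rho_t t x)
                       (\<lambda>x. w x / th t x)
         - ip {v1..v2} (\<lambda>x. Q (th t x) - th t x * pd2 P (rho t x, th t x)) h
         + ip {v1..v2} (\<lambda>x. m t x * pd2 P (rho t x, th t x) * th_x t x)
                       (\<lambda>x. w x / th t x) = 0"
begin

abbreviation \<omega> :: "real set" where
  "\<omega> \<equiv> {v1..v2}"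

lemmas has_real_derivative_t =
  C1_on_has_real_derivative_t[OF rho_C1] C1_on_has_real_derivative_t[OF m_C1]
  C1_on_has_real_derivative_t[OF th_C1]

lemmas has_real_derivative_x =
  C1_on_has_real_derivative_x[OF rho_C1] C1_on_has_real_derivative_x[OF m_C1]
  C1_on_has_real_derivative_x[OF th_C1]

lemma state_in_positive_quadrant: "t \<in> U \<Longrightarrow> x \<in> \<omega> \<Longrightarrow> (rho t x, th t x) \<in> positive_quadrant"
  using positive by auto

lemma nonzero: "t \<in> U \<Longrightarrow> x \<in> \<omega> \<Longrightarrow> rho t x \<noteq> 0" "t \<in> U \<Longrightarrow> x \<in> \<omega> \<Longrightarrow> th t x \<noteq> 0"
  using positive by (metis less_irrefl)+

lemma continuous_on_fields:
  "continuous_on (U \<times> \<omega>) (\<lambda>p. rho (fst p) (snd p))"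
  "continuous_on (U \<times> \<omega>) (\<lambda>p. rho_t (fst p) (snd p))"
  "continuous_on (U \<times> \<omega>) (\<lambda>p. rho_x (fst p) (snd p))"
  "continuous_on (U \<times> \<omega>) (\<lambda>p. m (fst p) (snd p))"
  "continuous_on (U \<times> \<omega>) (\<lambda>p. m_t (fst p) (snd p))"
  "continuous_on (U \<times> \<omega>) (\<lambda>p. m_x (fst p) (snd p))"
  "continuous_on (U \<times> \<omega>) (\<lambda>p. th (fst p) (snd p))"
  "continuous_on (U \<times> \<omega>) (\<lambda>p. th_t (fst p) (snd p))"
  "continuous_on (U \<times> \<omega>) (\<lambda>p. th_x (fst p) (snd p))"
  using C1_on_continuous_on[OF rho_C1] C1_on_continuous_on[OF m_C1] C1_on_continuous_on[OF th_C1]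
    rho_C1 m_C1 th_C1
  unfolding C1_on_def case_prod_beta' by auto

lemmas continuous_on_fields_at = continuous_on_fields[THEN continuous_on_slice]

lemma continuous_on_state:
  "continuous_on positive_quadrant F \<Longrightarrow>
     continuous_on (U \<times> \<omega>) (\<lambda>p. F (rho (fst p) (snd p), th (fst p) (snd p)))"
  by (rule continuous_on_compose2[where t=positive_quadrant])
    (auto intro!: continuous_intros continuous_on_fields simp: positive)

lemma continuous_on_temperature:
  "continuous_on {0<..} G \<Longrightarrow> continuous_on (U \<times> \<omega>) (\<lambda>p. G (th (fst p) (snd p)))"
  by (rule continuous_on_compose2[where t="{0<..}"])
    (auto intro!: continuous_on_fields simp: positive)

lemma continuous_on_state_at:
  "t \<in> U \<Longrightarrow> continuous_on positive_quadrant F \<Longrightarrow> continuous_on \<omega> (\<lambda>x. F (rho t x, th t x))"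
  by (rule continuous_on_compose2[where t=positive_quadrant])
    (auto intro!: continuous_intros continuous_on_fields_at simp: positive)

lemma continuous_on_temperature_at:
  "t \<in> U \<Longrightarrow> continuous_on {0<..} G \<Longrightarrow> continuous_on \<omega> (\<lambda>x. G (th t x))"
  by (rule continuous_on_compose2[where t="{0<..}"])
    (auto intro!: continuous_on_fields_at simp: positive)

lemma continuity_integral:
  assumes "t \<in> U" "continuous_on \<omega> q"
  shows "has_bochner_integral (lebesgue_on \<omega>) (\<lambda>x. rho_t t x * q x + m_x t x * q x) 0"
proof -
  have "integrable (lebesgue_on \<omega>) (\<lambda>x. rho_t t x * q x)" "integrable (lebesgue_on \<omega>) (\<lambda>x. m_x t x * q x)"
    using assms by (auto intro!: continuous_imp_integrable_real continuous_intros continuous_on_fields_at)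
  then show ?thesis
    using continuity_eq[OF assms(1) continuous_imp_L2[OF assms(2)]]
    unfolding ip_def has_bochner_integral_iff by simp
qed

lemma momentum_integral:
  assumes "t \<in> U"
    and "\<And>x. x \<in> \<omega> \<Longrightarrow> (v has_real_derivative g x) (at x within \<omega>)" "continuous_on \<omega> g"
    and "v v1 = 0" "v v2 = 0"
  shows "has_bochner_integral (lebesgue_on \<omega>)
    (\<lambda>x. (m_t t x / rho t x - m t x / (2 * (rho t x)^2) * rho_t t x) * v x
       - ((m t x)^2 / (2 * (rho t x)^2) + pd1 (\<lambda>z. fst z * P z) (rho t x, th t x)) * g x
       + (m t x / (2 * (rho t x)^2) * m_x t x - pd2 P (rho t x, th t x) * th_x t x) * v x) 0"
proof -
  have "continuous_on \<omega> v"
    using assms(2) by (rule DERIV_continuous_on)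
  with assms have "integrable (lebesgue_on \<omega>)
      (\<lambda>x. (m_t t x / rho t x - m t x / (2 * (rho t x)^2) * rho_t t x) * v x)"
    "integrable (lebesgue_on \<omega>)
      (\<lambda>x. ((m t x)^2 / (2 * (rho t x)^2) + pd1 (\<lambda>z. fst z * P z) (rho t x, th t x)) * g x)"
    "integrable (lebesgue_on \<omega>)
      (\<lambda>x. (m t x / (2 * (rho t x)^2) * m_x t x - pd2 P (rho t x, th t x) * th_x t x) * v x)"
    by (auto intro!: continuous_imp_integrable_real continuous_intros continuous_on_fields_at
        continuous_on_state_at continuous_on_P continuous_on_constitutive simp: nonzero)
  then show ?thesis
    using momentum_eq[OF assms(1) C1_imp_H0div[OF interval assms(2-5)] C1_imp_weak_deriv[OF interval assms(2,3)]]
    unfolding ip_def has_bochner_integral_iff by simp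
qed

lemma energy_integral:
  assumes "t \<in> U"
    and "\<And>x. x \<in> \<omega> \<Longrightarrow> (w has_real_derivative w' x) (at x within \<omega>)" "continuous_on \<omega> w'"
    and "\<And>x. x \<in> \<omega> \<Longrightarrow> ((\<lambda>y. m t y * (w y / th t y)) has_real_derivative h x) (at x within \<omega>)"
    and "continuous_on \<omega> h"
  shows "has_bochner_integral (lebesgue_on \<omega>)
    (\<lambda>x. (rho t x * (pd1 (eint P Q) (rho t x, th t x) * rho_t t x
                 + pd2 (eint P Q) (rho t x, th t x) * th_t t x)
           - pres P (rho t x, th t x) / rho t x * rho_t t x) * (w x / th t x)
       - (Q (th t x) - th t x * pd2 P (rho t x, th t x)) * h x
       + m t x * pd2 P (rho t x, th t x) * th_x t x * (w x / th t x)) 0"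
proof -
  have "continuous_on \<omega> w"
    using assms(2) by (rule DERIV_continuous_on)
  with assms have "integrable (lebesgue_on \<omega>)
      (\<lambda>x. (rho t x * (pd1 (eint P Q) (rho t x, th t x) * rho_t t x
                   + pd2 (eint P Q) (rho t x, th t x) * th_t t x)
             - pres P (rho t x, th t x) / rho t x * rho_t t x) * (w x / th t x))"
    "integrable (lebesgue_on \<omega>) (\<lambda>x. (Q (th t x) - th t x * pd2 P (rho t x, th t x)) * h x)"
    "integrable (lebesgue_on \<omega>) (\<lambda>x. m t x * pd2 P (rho t x, th t x) * th_x t x * (w x / th t x))"
    by (auto intro!: continuous_imp_integrable_real continuous_intros continuous_on_fields_at
        continuous_on_state_at continuous_on_temperature_at continuous_on_P continuous_on_Q
        continuous_on_constitutive simp: nonzero)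
  moreover have "weak_deriv \<omega> (\<lambda>x. m t x * (w x / th t x)) h"
    using assms(4,5) by (rule C1_imp_weak_deriv[OF interval])
  ultimately show ?thesis
    using energy_eq[OF assms(1) C1_imp_H1[OF interval assms(2,3)]]
    unfolding ip_def has_bochner_integral_iff by (simp add: mult.assoc)
qed

lemma mass_conservation:
  assumes "t \<in> U"
  shows "((\<lambda>s. LINT x|lebesgue_on \<omega>. rho s x) has_real_derivative 0) (at t within U)"
proof -
  have "has_bochner_integral (lebesgue_on \<omega>) (\<lambda>x. rho_t t x * 1 + m_x t x * 1) 0"
    using assms by (intro continuity_integral) auto
  moreover have "has_bochner_integral (lebesgue_on \<omega>) (m_x t) (m t v2 - m t v1)"
    using assms has_real_derivative_x(2) continuous_on_fields_at(6)
    by (intro has_bochner_integral_FTC interval) auto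
  ultimately have "has_bochner_integral (lebesgue_on \<omega>) (\<lambda>x. (rho_t t x * 1 + m_x t x * 1) - m_x t x) (0 - 0)"
    using m_boundary[OF assms] by (intro has_bochner_integral_diff) simp_all
  then have "(LINT x|lebesgue_on \<omega>. rho_t t x) = 0"
    by (simp add: has_bochner_integral_integral_eq)
  moreover have "((\<lambda>s. LINT x|lebesgue_on \<omega>. rho s x) has_real_derivative
      (LINT x|lebesgue_on \<omega>. rho_t t x)) (at t within U)"
    using convex_time assms has_real_derivative_t(1) continuous_on_fields_at(1) continuous_on_fields(2)
    by (rule leibniz_rule_LINT)
  ultimately show ?thesis
    by simp
qed

definition energy_rate :: "real \<Rightarrow> real \<Rightarrow> real" where
  "energy_rate s x = m s x * m_t s x / rho s x - (m s x)^2 * rho_t s x / (2 * (rho s x)^2)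
    + rho_t s x * eint P Q (rho s x, th s x)
    + rho s x * (pd1 (eint P Q) (rho s x, th s x) * rho_t s x + pd2 (eint P Q) (rho s x, th s x) * th_t s x)"

definition entropy_rate :: "real \<Rightarrow> real \<Rightarrow> real" where
  "entropy_rate s x = rho_t s x * entr P Q (rho s x, th s x)
    + rho s x * (deriv Q (th s x) / th s x * th_t s x
      - pd1 (pd2 P) (rho s x, th s x) * rho_t s x - pd2 (pd2 P) (rho s x, th s x) * th_t s x)"

lemma energy_has_real_derivative:
  assumes "s \<in> U" "x \<in> \<omega>"
  shows "((\<lambda>s. Etot P Q (rho s x) (m s x) (th s x)) has_real_derivative energy_rate s x) (at s within U)"
proof -
  have "((\<lambda>s. eint P Q (rho s x, th s x)) has_real_derivative
      pd1 (eint P Q) (rho s x, th s x) * rho_t s x + pd2 (eint P Q) (rho s x, th s x) * th_t s x)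
      (at s within U)"
    using assms by (intro has_real_derivative_pd_chain eint_differentiable state_in_positive_quadrant
        has_real_derivative_t)
  then show ?thesis
    unfolding Etot_def energy_rate_def using nonzero[OF assms] has_real_derivative_t[OF assms]
    by (auto intro!: derivative_eq_intros simp: field_simps power2_eq_square)
qed

lemma entropy_has_real_derivative:
  assumes "s \<in> U" "x \<in> \<omega>"
  shows "((\<lambda>s. rho s x * entr P Q (rho s x, th s x)) has_real_derivative entropy_rate s x) (at s within U)"
proof -
  have "((\<lambda>s. pd2 P (rho s x, th s x)) has_real_derivative
      pd1 (pd2 P) (rho s x, th s x) * rho_t s x + pd2 (pd2 P) (rho s x, th s x) * th_t s x)
      (at s within U)"
    using assms by (intro has_real_derivative_pd_chain pd2_P_differentiable state_in_positive_quadrant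
        has_real_derivative_t)
  moreover have "((\<lambda>s. thermal_entropy Q (th s x)) has_real_derivative
      deriv Q (th s x) / th s x * th_t s x) (at s within U)"
    using assms positive by (intro DERIV_chain2[OF thermal_entropy_has_real_derivative]
        has_real_derivative_t) auto
  ultimately show ?thesis
    unfolding entr_eq_thermal_entropy entropy_rate_def using has_real_derivative_t(1)[OF assms]
    by (auto intro!: derivative_eq_intros)
qed

lemma continuous_on_energy_rate: "continuous_on (U \<times> \<omega>) (\<lambda>p. energy_rate (fst p) (snd p))"
  unfolding energy_rate_def
  by (auto intro!: continuous_intros continuous_on_fields continuous_on_state
      continuous_on_constitutive simp: nonzero)

lemma continuous_on_entropy_rate: "continuous_on (U \<times> \<omega>) (\<lambda>p. entropy_rate (fst p) (snd p))"
  unfolding entropy_rate_def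
  by (auto intro!: continuous_intros continuous_on_fields continuous_on_state continuous_on_temperature
      continuous_on_constitutive continuous_on_P continuous_on_Q simp: nonzero)

lemma energy_rate_integral:
  assumes t: "t \<in> U"
  shows "has_bochner_integral (lebesgue_on \<omega>) (energy_rate t) (0 + 0 + 0)"
proof -
  have dm: "((\<lambda>y. m t y * (th t y / th t y)) has_real_derivative m_x t x) (at x within \<omega>)"
    if "x \<in> \<omega>" for x
    using has_real_derivative_x(2)[OF t that]
    by (rule has_field_derivative_transform_within[where d=1]) (use that nonzero[OF t] in auto)
  have cq: "continuous_on \<omega> (\<lambda>x. eint P Q (rho t x, th t x) + pres P (rho t x, th t x) / rho t x)"
    by (auto intro!: continuous_intros continuous_on_fields_at continuous_on_state_at
        continuous_on_constitutive simp: nonzero t)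
  show ?thesis
    by (rule has_bochner_integral_add3_cong[OF
          momentum_integral[OF t has_real_derivative_x(2)[OF t] continuous_on_fields_at(6)[OF t]
            m_boundary[OF t]]
          energy_integral[OF t has_real_derivative_x(3)[OF t] continuous_on_fields_at(9)[OF t] dm
            continuous_on_fields_at(6)[OF t]]
          continuity_integral[OF t cq]])
      (simp_all add: pd1_fst_mult P_differentiable positive t,
        simp add: energy_rate_def nonzero t eint_def pres_def field_simps power2_eq_square)
qed

lemma thermal_flux_integral:
  assumes t: "t \<in> U"
  shows "has_bochner_integral (lebesgue_on \<omega>)
    (\<lambda>x. m_x t x * thermal_flux Q (th t x) + m t x * (- Q (th t x) / (th t x)^2 * th_x t x)) 0"
proof -
  have "((\<lambda>y. thermal_flux Q (th t y)) has_real_derivative - Q (th t x) / (th t x)^2 * th_x t x)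
      (at x within \<omega>)" if "x \<in> \<omega>" for x
    using positive[OF t that]
    by (intro DERIV_chain2[OF thermal_flux_has_real_derivative has_real_derivative_x(3)[OF t that]]) auto
  then have "((\<lambda>y. m t y * thermal_flux Q (th t y)) has_real_derivative
      m_x t x * thermal_flux Q (th t x) + m t x * (- Q (th t x) / (th t x)^2 * th_x t x))
      (at x within \<omega>)" if "x \<in> \<omega>" for x
    using has_real_derivative_x(2)[OF t that] that by (auto intro!: derivative_eq_intros)
  moreover have "continuous_on \<omega>
      (\<lambda>x. m_x t x * thermal_flux Q (th t x) + m t x * (- Q (th t x) / (th t x)^2 * th_x t x))"
    by (auto intro!: continuous_intros continuous_on_fields_at continuous_on_temperature_at t
        continuous_on_Q continuous_on_thermal_flux simp: nonzero t)
  ultimately have "has_bochner_integral (lebesgue_on \<omega>)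
      (\<lambda>x. m_x t x * thermal_flux Q (th t x) + m t x * (- Q (th t x) / (th t x)^2 * th_x t x))
      (m t v2 * thermal_flux Q (th t v2) - m t v1 * thermal_flux Q (th t v1))"
    by (rule has_bochner_integral_FTC[OF interval])
  then show ?thesis
    by (simp add: m_boundary t)
qed

lemma entropy_rate_integral:
  assumes t: "t \<in> U"
  shows "has_bochner_integral (lebesgue_on \<omega>) (entropy_rate t) (0 + 0 + 0)"
proof -
  have d1: "((\<lambda>y. 1) has_real_derivative 0) (at x within \<omega>)" for x :: real
    by simp
  have dm: "((\<lambda>y. m t y * (1 / th t y)) has_real_derivative
      (m_x t x * th t x - m t x * th_x t x) / (th t x)^2) (at x within \<omega>)" if "x \<in> \<omega>" for x
    using has_real_derivative_x(2,3)[OF t that] nonzero[OF t that]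
    by (auto intro!: derivative_eq_intros simp: field_simps power2_eq_square)
  have cm: "continuous_on \<omega> (\<lambda>x. (m_x t x * th t x - m t x * th_x t x) / (th t x)^2)"
    by (auto intro!: continuous_intros continuous_on_fields_at simp: nonzero t)
  have cs: "continuous_on \<omega> (\<lambda>x. entr P Q (rho t x, th t x))"
    by (intro continuous_on_state_at t continuous_on_constitutive)
  show ?thesis
    by (rule has_bochner_integral_add3_cong[OF energy_integral[OF t d1 continuous_on_const dm cm]
          continuity_integral[OF t cs] thermal_flux_integral[OF t]])
      (simp_all add: pd1_eint pd2_eint positive t, simp add: entropy_rate_def thermal_flux_def
        nonzero t entr_eq_thermal_entropy pres_def field_simps power2_eq_square)
qed

lemma energy_conservation:
  assumes "t \<in> U"
  shows "((\<lambda>s. LINT x|lebesgue_on \<omega>. Etot P Q (rho s x) (m s x) (th s x)) has_real_derivative 0)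
           (at t within U)"
proof -
  have "continuous_on \<omega> (\<lambda>x. Etot P Q (rho s x) (m s x) (th s x))" if "s \<in> U" for s
    unfolding Etot_def using that
    by (auto intro!: continuous_intros continuous_on_fields_at continuous_on_state_at
        continuous_on_constitutive simp: nonzero)
  with convex_time assms energy_has_real_derivative
  have "((\<lambda>s. LINT x|lebesgue_on \<omega>. Etot P Q (rho s x) (m s x) (th s x)) has_real_derivative
      (LINT x|lebesgue_on \<omega>. energy_rate t x)) (at t within U)"
    by (rule leibniz_rule_LINT[OF _ _ _ _ continuous_on_energy_rate])
  then show ?thesis
    using energy_rate_integral[OF assms] by (simp add: has_bochner_integral_integral_eq)
qed

lemma entropy_conservation:
  assumes "t \<in> U"
  shows "((\<lambda>s. LINT x|lebesgue_on \<omega>. rho s x * entr P Q (rho s x, th s x)) has_real_derivative 0)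
           (at t within U)"
proof -
  have "continuous_on \<omega> (\<lambda>x. rho s x * entr P Q (rho s x, th s x))" if "s \<in> U" for s
    using that by (auto intro!: continuous_intros continuous_on_fields_at continuous_on_state_at
        continuous_on_constitutive)
  with convex_time assms entropy_has_real_derivative
  have "((\<lambda>s. LINT x|lebesgue_on \<omega>. rho s x * entr P Q (rho s x, th s x)) has_real_derivative
      (LINT x|lebesgue_on \<omega>. entropy_rate t x)) (at t within U)"
    by (rule leibniz_rule_LINT[OF _ _ _ _ continuous_on_entropy_rate])
  then show ?thesis
    using entropy_rate_integral[OF assms] by (simp add: has_bochner_integral_integral_eq)
qed

end

theorem lemma3:
  fixes v1 v2 T cv :: real and P :: "real \<times> real \<Rightarrow> real" and Q :: "real \<Rightarrow> real"
    and rho m th rho_t rho_x m_t m_x th_t th_x :: "real \<Rightarrow> real \<Rightarrow> real"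
  assumes "v1 < v2" and "0 < T"
    and "Ck 3 ({0<..} \<times> {0<..}) P" and "Ck1 2 {0<..} Q" and "0 < cv"
    and "\<forall>r>0. \<forall>s>0. pd1 P (r, s) \<ge> 0"
    and "\<forall>r>0. \<forall>s>0. pd1 (\<lambda>z. fst z * pd1 P z) (r, s) \<ge> 0"
    and "\<forall>r>0. \<forall>s>0. deriv Q s - s * pd2 (pd2 P) (r, s) \<ge> cv"
    and "C1_on ({0<..T} \<times> {v1..v2}) rho rho_t rho_x"
    and "C1_on ({0<..T} \<times> {v1..v2}) m m_t m_x"
    and "C1_on ({0<..T} \<times> {v1..v2}) th th_t th_x"
    and "\<forall>t\<in>{0<..T}. \<forall>x\<in>{v1..v2}. 0 < rho t x \<and> 0 < th t x"
    and "\<forall>t\<in>{0<..T}. m t v1 = 0 \<and> m t v2 = 0"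
    and "\<forall>t\<in>{0<..T}. \<forall>q. L2 {v1..v2} q \<longrightarrow>
           ip {v1..v2} (\<lambda>x. rho_t t x) q + ip {v1..v2} (\<lambda>x. m_x t x) q = 0"
    and "\<forall>t\<in>{0<..T}. \<forall>v. H0div {v1..v2} v \<longrightarrow> (\<forall>g. weak_deriv {v1..v2} v g \<longrightarrow>
           ip {v1..v2} (\<lambda>x. m_t t x / rho t x - m t x / (2 * (rho t x)^2) * rho_t t x) v
         - ip {v1..v2} (\<lambda>x. (m t x)^2 / (2 * (rho t x)^2)
                             + pd1 (\<lambda>z. fst z * P z) (rho t x, th t x)) g
         + ip {v1..v2} (\<lambda>x. m t x / (2 * (rho t x)^2) * m_x t x
                             - pd2 P (rho t x, th t x) * th_x t x) v = 0)"
    and "\<forall>t\<in>{0<..T}. \<forall>w. H1 {v1..v2} w \<longrightarrow>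
           (\<forall>h. weak_deriv {v1..v2} (\<lambda>x. m t x * (w x / th t x)) h \<longrightarrow>
           ip {v1..v2} (\<lambda>x. rho t x * (pd1 (eint P Q) (rho t x, th t x) * rho_t t x
                                       + pd2 (eint P Q) (rho t x, th t x) * th_t t x)
                             - pres P (rho t x, th t x) / rho t x * rho_t t x)
                       (\<lambda>x. w x / th t x)
         - ip {v1..v2} (\<lambda>x. Q (th t x) - th t x * pd2 P (rho t x, th t x)) h
         + ip {v1..v2} (\<lambda>x. m t x * pd2 P (rho t x, th t x) * th_x t x)
                       (\<lambda>x. w x / th t x) = 0)"
  shows "\<forall>t\<in>{0<..T}.
           ((\<lambda>s. LINT x|lebesgue_on {v1..v2}. rho s x) has_real_derivative 0) (at t within {0<..T})
         \<and> ((\<lambda>s. LINT x|lebesgue_on {v1..v2}. Etot P Q (rho s x) (m s x) (th s x))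
               has_real_derivative 0) (at t within {0<..T})
         \<and> ((\<lambda>s. LINT x|lebesgue_on {v1..v2}. rho s x * entr P Q (rho s x, th s x))
               has_real_derivative 0) (at t within {0<..T})"
proof -
  interpret euler_weak_solution P Q v1 v2 "{0<..T}" rho m th rho_t rho_x m_t m_x th_t th_x
  proof
    show "Ck 2 positive_quadrant P"
      using assms(3) by (rule Ck_Suc_imp_Ck[of 2, simplified])
    show "Ck1 1 {0<..} Q"
      using assms(4) by (rule Ck1_Suc_imp_Ck1[of 1, unfolded Suc_1])
  qed (use assms in \<open>auto simp: convex_real_interval\<close>)
  show ?thesis
    using mass_conservation energy_conservation entropy_conservation by blast
qed

end
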